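(* Let $N$, $\mathfrak n=\bigoplus_{j=1}^{m+1}V_j$, $\mathcal B=\{X_1,\dots,X_p\}$, $L$, $s$, $\ell_1$, $\ell_2$, $\mathcal S=\{Y_1,\dots,Y_n\}$, $r=p-n$, $\mathfrak h$, $H$ and $d\pi_\nu$ be as in the context (in particular $0\le s<m$ and $\ell_i([V_k,V_j])=0$ for $i=1,2$ and all $k,j\ge 2$). Let $\lambda=\lambda_{s+1,\alpha}\ell_1+\lambda_{m+1,\beta}\ell_2$ with $\lambda_{s+1,\alpha},\lambda_{m+1,\beta}$ nonzero real numbers. Then there exist homogeneous polynomials $\tilde p_1,\dots,\tilde p_n,p_1,\dots,p_r$ of degree $s$ and homogeneous polynomials $\tilde q_1,\dots,\tilde q_n,q_1,\dots,q_r$ of degree $m$ on $\mathbb R^n$, all with real coefficients, such that for $f\in C^\infty(\mathbb R^n)$ $$d\pi_\lambda(L)f=\sum_{j=1}^n\Big(\frac{\partial}{\partial t_j}+i\big(\lambda_{s+1,\alpha}\tilde p_j(t)+\lambda_{m+1,\beta}\tilde q_j(t)\big)\Big)^2f-\sum_{k=1}^r\big(\lambda_{m+1,\beta}q_k(t)+\lambda_{s+1,\alpha}p_k(t)\big)^2f.$$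
   Context: Let $N$ be a connected, simply connected nilpotent Lie group whose Lie algebra $\mathfrak n$ (identified with the left-invariant vector fields on $N$) is stratified: $\mathfrak n=\bigoplus_{j=1}^{m+1}V_j$ with finite-dimensional subspaces $V_j$, $m\ge1$, $[V_i,V_j]\subseteq V_{i+j}$ if $i+j\le m+1$, $[V_i,V_j]=0$ if $i+j>m+1$, and $V_1$ generating $\mathfrak n$ as a Lie algebra. Let $\mathcal B=\{X_1,\dots,X_p\}$ be a basis of $V_1$ and $L=\sum_{i=1}^pX_i^2$. Fix an integer $s$ with $0\le s<m$. Fix a basis $\{X_{s+1,j}\}$ of $V_{s+1}$ and an index $\alpha$, and let $\ell_1\in\mathfrak n^*$ be defined by $\ell_1|_{V_i}=0$ for $i\ne s+1$ and $\ell_1(X_{s+1,j})=\delta_{j\alpha}$. Fix a basis $\{X_{m+1,j}\}$ of $V_{m+1}$ and an index $\beta$, and let $\ell_2\in\mathfrak n^*$ be defined by $\ell_2|_{V_i}=0$ for $i\le m$ and $\ell_2(X_{m+1,j})=\delta_{j\beta}$. Assume $\ell_i([V_k,V_j])=0$ for $i=1,2$ and all $k,j\ge2$. Greedy procedure for $\ell\in\mathfrak n^*$: let $P$ initially be the set of unordered pairs $\{X_k,X_j\}\subseteq\mathcal B$ with $\ell([X_k,X_j])\ne0$, and the output set be empty. While some element of $\mathcal B$ lies in at least two pairs of $P$: choose an element lying in the maximal number of pairs of $P$, add it to the output, and delete from $P$ all pairs containing it. When every element lies in at most one pair of $P$, add to the output one arbitrarily chosen element of each remaining pair. (Any admissible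 choices may be made.) Define $\mathcal S_1,\mathcal S_2\subseteq\mathcal B$: if $s\ne1$ and $m\ne1$, $\mathcal S_1=\{X\in\mathcal B:\exists Y\in\mathfrak n,\ \ell_1([X,Y])\ne0\}$ and $\mathcal S_2=\{X\in\mathcal B:\exists Y\in\mathfrak n,\ \ell_2([X,Y])\ne0\}$; if $s=1$, $\mathcal S_1$ is the output of the greedy procedure for $\ell_1$ and $\mathcal S_2$ is as in the previous case; if $m=1$ (so $s=0$), $\mathcal S_1=\emptyset$ and $\mathcal S_2$ is the output of the greedy procedure for $\ell_2$. Let $\mathcal S=\mathcal S_1\cup\mathcal S_2=\{Y_1,\dots,Y_n\}$, $n=\#\mathcal S$, $r=p-n$. Let $W$ be the span of $\mathcal B\setminus\mathcal S$, $\mathfrak h=W\oplus V_2\oplus\cdots\oplus V_{m+1}$ (an ideal of codimension $n$), $H=\exp\mathfrak h$. For $t\in\mathbb R^n$ put $e(t)=\exp(t_1Y_1+\dots+t_nY_n)$; for $a\in N$ let $a_{\mathcal S}\in\mathbb R^n$ be the unique vector with $a\in e(a_{\mathcal S})H$. For an $\mathbb R$-linear map $\nu:\mathfrak n\to\mathbb C$, $a\in N$, $f\in C^\infty(\mathbb R^n)$, set $(\pi_\nu(a)f)(t)=\exp\big(i\,\nu(\log(e(t)\,a\,e(t+a_{\mathcal S})^{-1}))\big)f(t+a_{\mathcal S})$, where $\log$ is the inverse of $\exp$ (for real $\nu$ vanishing on $[\mathfrak h,\mathfrak h]$ this is the representation of $N$ induced from the character $e^{i\nu\circ\log}$ of $H$).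 For $X\in\mathfrak n$ set $d\pi_\nu(X)f=\frac{d}{d\tau}\big|_{\tau=0}\pi_\nu(\exp\tau X)f$, and $d\pi_\nu(L)=\sum_{i=1}^p d\pi_\nu(X_i)^2$. *)

theory Defs
  imports "HOL-Analysis.Analysis"
begin

definition lie_bracket :: "('v::real_vector \<Rightarrow> 'v \<Rightarrow> 'v) \<Rightarrow> bool" where
  "lie_bracket br \<longleftrightarrow> bilinear br \<and> (\<forall>x. br x x = 0) \<and>
     (\<forall>x y z. br x (br y z) + br y (br z x) + br z (br x y) = 0)"

definition lie_subalgebra :: "('v::real_vector \<Rightarrow> 'v \<Rightarrow> 'v) \<Rightarrow> 'v set \<Rightarrow> bool" where
  "lie_subalgebra br A \<longleftrightarrow> subspace A \<and> (\<forall>x\<in>A. \<forall>y\<in>A. br x y \<in> A)"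

definition stratified :: "('v::real_vector \<Rightarrow> 'v \<Rightarrow> 'v) \<Rightarrow> (nat \<Rightarrow> 'v set) \<Rightarrow> nat \<Rightarrow> bool" where
  "stratified br V m \<longleftrightarrow> lie_bracket br \<and> 1 \<le> m \<and>
     (\<forall>j\<in>{1..m+1}. subspace (V j)) \<and>
     (\<forall>v. \<exists>!w. (\<forall>j\<in>{1..m+1}. w j \<in> V j) \<and> (\<forall>j. j \<notin> {1..m+1} \<longrightarrow> w j = 0) \<and>
            v = (\<Sum>j=1..m+1. w j)) \<and>
     (\<forall>i\<in>{1..m+1}. \<forall>j\<in>{1..m+1}. i + j \<le> m + 1 \<longrightarrow>
         (\<forall>x\<in>V i. \<forall>y\<in>V j. br x y \<in> V (i + j))) \<and>
     (\<forall>i\<in>{1..m+1}. \<forall>j\<in>{1..m+1}. i + j > m + 1 \<longrightarrow>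
         (\<forall>x\<in>V i. \<forall>y\<in>V j. br x y = 0)) \<and>
     (\<forall>A. lie_subalgebra br A \<and> V 1 \<subseteq> A \<longrightarrow> A = UNIV)"

definition basis_enum :: "(nat \<Rightarrow> 'v::real_vector) \<Rightarrow> nat \<Rightarrow> 'v set \<Rightarrow> bool" where
  "basis_enum Z d W \<longleftrightarrow> inj_on Z {..<d} \<and> independent (Z ` {..<d}) \<and> span (Z ` {..<d}) = W"

fun nest :: "('v::real_vector \<Rightarrow> 'v \<Rightarrow> 'v) \<Rightarrow> 'v list \<Rightarrow> 'v" where
  "nest br [] = 0"
| "nest br [a] = a"
| "nest br (a # b # w) = br a (nest br (b # w))"

definition dynkin_words :: "nat \<Rightarrow> (nat \<times> nat) list set" where
  "dynkin_words D = {rs. rs \<noteq> [] \<and> length rs \<le> D \<and>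
      (\<forall>(r, s)\<in>set rs. 1 \<le> r + s \<and> r \<le> D \<and> s \<le> D) \<and> (\<Sum>(r, s)\<leftarrow>rs. r + s) \<le> D}"

text \<open>Dynkin's formula for log(exp x exp y), truncated at total degree D
  (exact when all brackets of length > D vanish).\<close>
definition bch :: "('v::real_vector \<Rightarrow> 'v \<Rightarrow> 'v) \<Rightarrow> nat \<Rightarrow> 'v \<Rightarrow> 'v \<Rightarrow> 'v" where
  "bch br D x y = (\<Sum>rs\<in>dynkin_words D.
      ((-1) ^ (length rs - 1) /
        (real (length rs) * real (\<Sum>(r, s)\<leftarrow>rs. r + s) *
         (\<Prod>(r, s)\<leftarrow>rs. fact r * fact s))) *\<^sub>R
      nest br (concat (map (\<lambda>(r, s). replicate r x @ replicate s y) rs)))"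

text \<open>We identify N with its Lie algebra via exp (so exp = log = identity);
  the product of a step-(m+1) nilpotent group is then bch br (m+1), and a^-1 = -a.\<close>
definition gmult :: "('v::real_vector \<Rightarrow> 'v \<Rightarrow> 'v) \<Rightarrow> nat \<Rightarrow> 'v \<Rightarrow> 'v \<Rightarrow> 'v" where
  "gmult br m a b = bch br (m + 1) a b"

definition pair_count :: "'a set set \<Rightarrow> 'a \<Rightarrow> nat" where
  "pair_count P x = card {q\<in>P. x \<in> q}"

inductive greedy :: "'a set set \<Rightarrow> 'a set \<Rightarrow> 'a set \<Rightarrow> bool" where
  step: "2 \<le> pair_count P x \<Longrightarrow> (\<forall>y. pair_count P y \<le> pair_count P x) \<Longrightarrow>
         greedy {q\<in>P. x \<notin> q} (insert x Out) R \<Longrightarrow> greedy P Out R"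
| stop: "(\<forall>y. pair_count P y \<le> 1) \<Longrightarrow> (\<forall>q\<in>P. c q \<in> q) \<Longrightarrow> greedy P Out (Out \<union> c ` P)"

definition init_pairs :: "('v \<Rightarrow> 'v \<Rightarrow> 'v) \<Rightarrow> ('v \<Rightarrow> real) \<Rightarrow> 'v set \<Rightarrow> 'v set set" where
  "init_pairs br l B = {{a, b} | a b. a \<in> B \<and> b \<in> B \<and> l (br a b) \<noteq> 0}"

definition greedy_output :: "('v \<Rightarrow> 'v \<Rightarrow> 'v) \<Rightarrow> ('v \<Rightarrow> real) \<Rightarrow> 'v set \<Rightarrow> 'v set \<Rightarrow> bool" where
  "greedy_output br l B R \<longleftrightarrow> greedy (init_pairs br l B) {} R"

definition supp_set :: "('v \<Rightarrow> 'v \<Rightarrow> 'v) \<Rightarrow> ('v \<Rightarrow> real) \<Rightarrow> 'v set \<Rightarrow> 'v set" where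
  "supp_set br l B = {x\<in>B. \<exists>y. l (br x y) \<noteq> 0}"

definition S_choice :: "('v \<Rightarrow> 'v \<Rightarrow> 'v) \<Rightarrow> nat \<Rightarrow> nat \<Rightarrow> 'v set \<Rightarrow>
    ('v \<Rightarrow> real) \<Rightarrow> ('v \<Rightarrow> real) \<Rightarrow> 'v set \<Rightarrow> bool" where
  "S_choice br m s B l1 l2 S \<longleftrightarrow>
     (m = 1 \<longrightarrow> greedy_output br l2 B S) \<and>
     (s = 1 \<longrightarrow> (\<exists>S1. greedy_output br l1 B S1 \<and> S = S1 \<union> supp_set br l2 B)) \<and>
     (s \<noteq> 1 \<and> m \<noteq> 1 \<longrightarrow> S = supp_set br l1 B \<union> supp_set br l2 B)"

definition e_map :: "('n::finite \<Rightarrow> 'v::real_vector) \<Rightarrow> real^'n \<Rightarrow> 'v" where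
  "e_map Y t = (\<Sum>i\<in>UNIV. (t $ i) *\<^sub>R Y i)"

text \<open>a_S: the unique t with a \<in> e(t) H, i.e. e(t)^-1 a \<in> h.\<close>
definition coordS :: "('v::real_vector \<Rightarrow> 'v \<Rightarrow> 'v) \<Rightarrow> nat \<Rightarrow> 'v set \<Rightarrow> ('n::finite \<Rightarrow> 'v) \<Rightarrow> 'v \<Rightarrow> real^'n" where
  "coordS br m h Y a = (THE t. gmult br m (- e_map Y t) a \<in> h)"

definition rep_pi :: "('v::real_vector \<Rightarrow> 'v \<Rightarrow> 'v) \<Rightarrow> nat \<Rightarrow> 'v set \<Rightarrow> ('n::finite \<Rightarrow> 'v) \<Rightarrow>
    ('v \<Rightarrow> real) \<Rightarrow> 'v \<Rightarrow> (real^'n \<Rightarrow> complex) \<Rightarrow> real^'n \<Rightarrow> complex" where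
  "rep_pi br m h Y \<nu> a f t =
     (let aS = coordS br m h Y a in
      exp (\<i> * complex_of_real (\<nu> (gmult br m (gmult br m (e_map Y t) a) (- e_map Y (t + aS)))))
        * f (t + aS))"

definition d_rep_pi :: "('v::real_vector \<Rightarrow> 'v \<Rightarrow> 'v) \<Rightarrow> nat \<Rightarrow> 'v set \<Rightarrow> ('n::finite \<Rightarrow> 'v) \<Rightarrow>
    ('v \<Rightarrow> real) \<Rightarrow> 'v \<Rightarrow> (real^'n \<Rightarrow> complex) \<Rightarrow> real^'n \<Rightarrow> complex" where
  "d_rep_pi br m h Y \<nu> X f t = vector_derivative (\<lambda>\<tau>. rep_pi br m h Y \<nu> (\<tau> *\<^sub>R X) f t) (at 0)"

definition partial :: "'n::finite \<Rightarrow> (real^'n \<Rightarrow> complex) \<Rightarrow> real^'n \<Rightarrow> complex" where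
  "partial j g t = vector_derivative (\<lambda>u. g (t + u *\<^sub>R axis j 1)) (at 0)"

fun iter_partial :: "'n::finite list \<Rightarrow> (real^'n \<Rightarrow> complex) \<Rightarrow> real^'n \<Rightarrow> complex" where
  "iter_partial [] f = f"
| "iter_partial (j # js) f = partial j (iter_partial js f)"

definition smooth_fun :: "(real^'n::finite \<Rightarrow> complex) \<Rightarrow> bool" where
  "smooth_fun f \<longleftrightarrow> (\<forall>js. continuous_on UNIV (iter_partial js f) \<and>
      (\<forall>j t. (\<lambda>u. iter_partial js f (t + u *\<^sub>R axis j 1)) differentiable (at 0)))"

definition homog_poly :: "nat \<Rightarrow> (real^'n::finite \<Rightarrow> real) \<Rightarrow> bool" where
  "homog_poly d P \<longleftrightarrow> (\<exists>c :: ('n \<Rightarrow> nat) \<Rightarrow> real. \<forall>t.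
      P t = (\<Sum>\<alpha>\<in>{\<alpha>. sum \<alpha> UNIV = d}. c \<alpha> * (\<Prod>i\<in>UNIV. (t $ i) ^ \<alpha> i)))"

end

theory Submission
  imports Defs
begin

(* Identify N with its Lie algebra through exp. For X in V_1 one has
   pi(exp(tau X)) f (t) = exp(i lambda(Phi(tau, t))) f(t + tau c), where c is the unit vector e_j
   if X = Y_j and c = 0 if X is not in S, and Phi(tau, t) = log(e(t) exp(tau X) e(t + tau c)^-1)
   vanishes at tau = 0. The value of c comes from the BCH formula: a product differs from the sum of
   its factors by an element of [n, n], which lies in h, and span S meets h only in 0. Hence
   d pi(Y_j) = d/dt_j + i lambda(Phi'(t)) and d pi(X) = i lambda(Phi'(t)) for X outside S, which
   gives the sum of squares. Expanding Phi by the BCH formula, where e(t) has weight 0 in t and every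
   bracket adds weights, the V_j-component of Phi' is a homogeneous polynomial of degree j - 1; the
   functionals l1 and l2 only see V_(s+1) and V_(m+1), so they produce degrees s and m. *)

section \<open>Homogeneous polynomials and smooth functions\<close>

lemma finite_multidegrees: "finite {\<alpha>::'n::finite \<Rightarrow> nat. sum \<alpha> UNIV = d}"
proof (rule finite_subset)
  show "{\<alpha>::'n \<Rightarrow> nat. sum \<alpha> UNIV = d} \<subseteq> PiE UNIV (\<lambda>_. {..d})"
  proof
    fix \<alpha> :: "'n \<Rightarrow> nat"
    assume "\<alpha> \<in> {\<alpha>. sum \<alpha> UNIV = d}"
    then have "\<alpha> i \<le> d" for i
      using member_le_sum[of i UNIV \<alpha>] by simp
    then show "\<alpha> \<in> PiE UNIV (\<lambda>_. {..d})"
      by auto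
  qed
qed (simp add: finite_PiE)

lemma homog_poly_0: "homog_poly d (\<lambda>t. 0)"
  unfolding homog_poly_def by (intro exI[of _ "\<lambda>_. 0"]) simp

lemma homog_poly_add:
  assumes "homog_poly d P" "homog_poly d Q"
  shows "homog_poly d (\<lambda>t. P t + Q t)"
proof -
  obtain c c' where "\<And>t. P t = (\<Sum>\<alpha>\<in>{\<alpha>. sum \<alpha> UNIV = d}. c \<alpha> * (\<Prod>i\<in>UNIV. (t $ i) ^ \<alpha> i))"
    and "\<And>t. Q t = (\<Sum>\<alpha>\<in>{\<alpha>. sum \<alpha> UNIV = d}. c' \<alpha> * (\<Prod>i\<in>UNIV. (t $ i) ^ \<alpha> i))"
    using assms unfolding homog_poly_def by blast
  then show ?thesis
    unfolding homog_poly_def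
    by (intro exI[of _ "\<lambda>\<alpha>. c \<alpha> + c' \<alpha>"]) (simp add: distrib_right sum.distrib)
qed

lemma homog_poly_cmult:
  assumes "homog_poly d P"
  shows "homog_poly d (\<lambda>t. a * P t)"
proof -
  obtain c where "\<And>t. P t = (\<Sum>\<alpha>\<in>{\<alpha>. sum \<alpha> UNIV = d}. c \<alpha> * (\<Prod>i\<in>UNIV. (t $ i) ^ \<alpha> i))"
    using assms unfolding homog_poly_def by blast
  then show ?thesis
    unfolding homog_poly_def
    by (intro exI[of _ "\<lambda>\<alpha>. a * c \<alpha>"]) (simp add: sum_distrib_left mult.assoc)
qed

lemma homog_poly_const: "homog_poly 0 (\<lambda>t::real^'n::finite. a)"
proof -
  have "{\<alpha>::'n \<Rightarrow> nat. sum \<alpha> UNIV = 0} = {\<lambda>_. 0}"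
    by (auto simp: fun_eq_iff sum_eq_0_iff)
  then show ?thesis
    unfolding homog_poly_def by (intro exI[of _ "\<lambda>_. a"]) simp
qed

lemma homog_poly_coordinate: "homog_poly 1 (\<lambda>t::real^'n::finite. t $ i)"
proof -
  define \<delta> where "\<delta> = (\<lambda>j::'n. if j = i then 1::nat else 0)"
  have "\<delta> \<in> {\<alpha>. sum \<alpha> UNIV = 1}"
    by (simp add: \<delta>_def)
  then have "(\<Sum>\<alpha>\<in>{\<alpha>::'n \<Rightarrow> nat. sum \<alpha> UNIV = 1}. (if \<alpha> = \<delta> then 1 else 0) * (\<Prod>j\<in>UNIV. (t $ j) ^ \<alpha> j))
      = (\<Prod>j\<in>UNIV. (t $ j) ^ \<delta> j)" for t :: "real^'n"
    by (simp add: if_distrib[of "\<lambda>c. c * _"] sum.delta[OF finite_multidegrees] cong: if_cong)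
  also have "(\<Prod>j\<in>UNIV. (t $ j) ^ \<delta> j) = t $ i" for t :: "real^'n"
    by (simp add: \<delta>_def if_distrib prod.If_cases cong: if_cong)
  finally show ?thesis
    unfolding homog_poly_def by (intro exI[of _ "\<lambda>\<alpha>. if \<alpha> = \<delta> then 1 else 0"]) simp
qed

lemma homog_poly_mult:
  assumes "homog_poly a P" "homog_poly b Q"
  shows "homog_poly (a + b) (\<lambda>t::real^'n::finite. P t * Q t)"
proof -
  define A where "A = {\<alpha>::'n \<Rightarrow> nat. sum \<alpha> UNIV = a}"
  define B where "B = {\<alpha>::'n \<Rightarrow> nat. sum \<alpha> UNIV = b}"
  define C where "C = {\<alpha>::'n \<Rightarrow> nat. sum \<alpha> UNIV = a + b}"
  define mon where "mon t \<alpha> = (\<Prod>i\<in>UNIV. (t $ i) ^ \<alpha> i)" for t :: "real^'n" and \<alpha>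
  obtain c where c: "\<And>t. P t = (\<Sum>\<alpha>\<in>A. c \<alpha> * mon t \<alpha>)"
    using assms(1) unfolding homog_poly_def A_def mon_def by blast
  obtain d where d: "\<And>t. Q t = (\<Sum>\<beta>\<in>B. d \<beta> * mon t \<beta>)"
    using assms(2) unfolding homog_poly_def B_def mon_def by blast
  define g where "g x = (\<lambda>i. fst x i + snd x i)" for x :: "('n \<Rightarrow> nat) \<times> ('n \<Rightarrow> nat)"
  define e where "e \<gamma> = (\<Sum>x\<in>{x \<in> A \<times> B. g x = \<gamma>}. c (fst x) * d (snd x))" for \<gamma>
  have gC: "g ` (A \<times> B) \<subseteq> C"
    unfolding A_def B_def C_def g_def by (auto simp: sum.distrib)
  have mon_g: "mon t (g x) = mon t (fst x) * mon t (snd x)" for t x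
    unfolding mon_def g_def by (auto simp: power_add prod.distrib)
  have "P t * Q t = (\<Sum>\<gamma>\<in>C. e \<gamma> * mon t \<gamma>)" for t
  proof -
    have "P t * Q t = (\<Sum>x\<in>A \<times> B. c (fst x) * d (snd x) * mon t (g x))"
      unfolding c d sum_product sum.cartesian_product mon_g
      by (intro sum.cong) (auto simp: ac_simps)
    also have "\<dots> = (\<Sum>\<gamma>\<in>C. \<Sum>x\<in>{x \<in> A \<times> B. g x = \<gamma>}. c (fst x) * d (snd x) * mon t (g x))"
      using gC by (intro sum.group[symmetric]) (auto simp: A_def B_def C_def finite_multidegrees)
    also have "\<dots> = (\<Sum>\<gamma>\<in>C. e \<gamma> * mon t \<gamma>)"
      unfolding e_def sum_distrib_right by (intro sum.cong) auto
    finally show ?thesis .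
  qed
  then show ?thesis
    unfolding homog_poly_def C_def mon_def by blast
qed

lemma differentiable_prod [derivative_intros]:
  fixes f :: "'i \<Rightarrow> 'a::real_normed_vector \<Rightarrow> 'b::real_normed_field"
  assumes "\<And>i. i \<in> I \<Longrightarrow> f i differentiable (at x within S)"
  shows "(\<lambda>x. \<Prod>i\<in>I. f i x) differentiable (at x within S)"
proof -
  have "\<forall>i\<in>I. \<exists>D. (f i has_derivative D) (at x within S)"
    using assms unfolding differentiable_def by blast
  then obtain f' where "\<forall>i\<in>I. (f i has_derivative f' i) (at x within S)"
    by (rule bchoice[elim_format]) blast
  then have "((\<lambda>x. \<Prod>i\<in>I. f i x) has_derivative
      (\<lambda>y. \<Sum>i\<in>I. f' i y * (\<Prod>j\<in>I - {i}. f j x))) (at x within S)"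
    by (intro has_derivative_prod) blast
  then show ?thesis
    unfolding differentiable_def by blast
qed

lemma homog_poly_line_differentiable:
  fixes t v :: "real^'n::finite"
  assumes "homog_poly d P"
  shows "(\<lambda>u. P (t + u *\<^sub>R v)) differentiable (at x)"
proof -
  obtain c where "\<And>t. P t = (\<Sum>\<alpha>\<in>{\<alpha>. sum \<alpha> UNIV = d}. c \<alpha> * (\<Prod>i\<in>UNIV. (t $ i) ^ \<alpha> i))"
    using assms unfolding homog_poly_def by blast
  then show ?thesis
    by (simp add: finite_multidegrees differentiable_prod)
qed

lemma smooth_fun_line_differentiable:
  "smooth_fun f \<Longrightarrow> (\<lambda>u. iter_partial js f (t + u *\<^sub>R axis j 1)) differentiable (at 0)"
  unfolding smooth_fun_def by blast

section \<open>The Dynkin series\<close>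

definition dynkin_word :: "'a \<Rightarrow> 'a \<Rightarrow> (nat \<times> nat) list \<Rightarrow> 'a list" where
  "dynkin_word x y rs = concat (map (\<lambda>(r, s). replicate r x @ replicate s y) rs)"

definition dynkin_coeff :: "(nat \<times> nat) list \<Rightarrow> real" where
  "dynkin_coeff rs = (-1) ^ (length rs - 1) /
     (real (length rs) * real (\<Sum>(r, s)\<leftarrow>rs. r + s) * (\<Prod>(r, s)\<leftarrow>rs. fact r * fact s))"

lemma bch_eq_sum_dynkin_words:
  "bch br D x y = (\<Sum>rs\<in>dynkin_words D. dynkin_coeff rs *\<^sub>R nest br (dynkin_word x y rs))"
  unfolding bch_def dynkin_coeff_def dynkin_word_def ..

lemma finite_dynkin_words: "finite (dynkin_words D)"
proof -
  have "dynkin_words D \<subseteq> {xs. set xs \<subseteq> {..D} \<times> {..D} \<and> length xs \<le> D}"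
    unfolding dynkin_words_def by auto
  moreover have "finite {xs. set xs \<subseteq> {..D} \<times> {..D} \<and> length xs \<le> D}"
    by (rule finite_lists_length_le) auto
  ultimately show ?thesis
    by (rule finite_subset)
qed

lemma dynkin_word_simps [simp]:
  "dynkin_word x y [] = []"
  "dynkin_word x y ((r, s) # rs) = replicate r x @ replicate s y @ dynkin_word x y rs"
  unfolding dynkin_word_def by simp_all

lemma length_dynkin_word: "length (dynkin_word x y rs) = (\<Sum>(r, s)\<leftarrow>rs. r + s)"
  by (induction rs) auto

lemma set_dynkin_word: "set (dynkin_word x y rs) \<subseteq> {x, y}"
proof (induction rs)
  case (Cons q rs)
  then show ?case
    by (cases q) (auto simp: set_replicate_conv_if)
qed simp

lemma map_dynkin_word: "map f (dynkin_word x y rs) = dynkin_word (f x) (f y) rs"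
  by (induction rs) auto

lemma length_dynkin_word_ge_2:
  assumes "rs \<in> dynkin_words D - {[(1, 0)], [(0, 1)]}"
  shows "2 \<le> length (dynkin_word x y rs)"
proof -
  have pos: "\<forall>(r, s)\<in>set rs. 1 \<le> r + s" and "rs \<noteq> []"
    using assms unfolding dynkin_words_def by auto
  then obtain r s rest where rs: "rs = (r, s) # rest"
    by (metis list.exhaust surj_pair)
  show ?thesis
  proof (cases rest)
    case Nil
    then have "(r, s) \<noteq> (1, 0)" "(r, s) \<noteq> (0, 1)" "1 \<le> r + s"
      using assms pos rs by auto
    then have "2 \<le> r + s"
      by (cases r; cases s) auto
    then show ?thesis
      using rs Nil by (simp add: length_dynkin_word)
  next
    case (Cons q rest')
    then show ?thesis
      using pos rs by (cases q) (simp add: length_dynkin_word)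
  qed
qed

lemma bch_eq_add_plus_brackets:
  assumes "1 \<le> D"
  shows "bch br D x y = x + y +
    (\<Sum>rs\<in>dynkin_words D - {[(1, 0)], [(0, 1)]}. dynkin_coeff rs *\<^sub>R nest br (dynkin_word x y rs))"
proof -
  let ?term = "\<lambda>rs. dynkin_coeff rs *\<^sub>R nest br (dynkin_word x y rs)"
  have "{[(1, 0)], [(0, 1)]} \<subseteq> dynkin_words D"
    using assms unfolding dynkin_words_def by auto
  then have "bch br D x y = (\<Sum>rs\<in>dynkin_words D - {[(1, 0)], [(0, 1)]}. ?term rs)
      + (\<Sum>rs\<in>{[(1, 0)], [(0, 1)]}. ?term rs)"
    unfolding bch_eq_sum_dynkin_words by (rule sum.subset_diff[OF _ finite_dynkin_words])
  moreover have "(\<Sum>rs\<in>{[(1, 0)], [(0, 1)]}. ?term rs) = x + y"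
    by (simp add: dynkin_coeff_def)
  ultimately show ?thesis
    by (simp add: add.commute)
qed

lemma nest_Cons: "xs \<noteq> [] \<Longrightarrow> nest br (x # xs) = br x (nest br xs)"
  by (cases xs) auto

lemma nest_collinear:
  assumes br: "bilinear br" "\<And>x. br x x = 0"
    and xs: "set xs \<subseteq> range (\<lambda>c. c *\<^sub>R u)" "2 \<le> length xs"
  shows "nest br xs = 0"
proof -
  have br_multiples: "br (a *\<^sub>R u) (b *\<^sub>R u) = 0" for a b
    using br by (simp add: bilinear_lmul bilinear_rmul)
  have nest_multiple: "nest br ys \<in> range (\<lambda>c. c *\<^sub>R u)"
    if "ys \<noteq> []" "set ys \<subseteq> range (\<lambda>c. c *\<^sub>R u)" for ys
    using that
  proof (induction ys)
    case (Cons y ys)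
    then show ?case
      using br_multiples by (cases "ys = []") (auto simp: nest_Cons image_iff intro: exI[of _ 0])
  qed simp
  obtain y z zs where xs_eq: "xs = y # z # zs"
    using xs(2) by (metis One_nat_def Suc_1 Suc_le_length_iff)
  have "nest br (z # zs) \<in> range (\<lambda>c. c *\<^sub>R u)"
    using xs(1) xs_eq by (intro nest_multiple) auto
  moreover have "y \<in> range (\<lambda>c. c *\<^sub>R u)"
    using xs(1) xs_eq by auto
  ultimately show ?thesis
    using xs_eq br_multiples by auto
qed

lemma bch_collinear:
  assumes "bilinear br" "\<And>x. br x x = 0" "1 \<le> D"
  shows "bch br D (a *\<^sub>R u) (b *\<^sub>R u) = (a + b) *\<^sub>R u"
proof -
  have "nest br (dynkin_word (a *\<^sub>R u) (b *\<^sub>R u) rs) = 0"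
    if "rs \<in> dynkin_words D - {[(1, 0)], [(0, 1)]}" for rs
  proof (rule nest_collinear[OF assms(1,2)])
    show "set (dynkin_word (a *\<^sub>R u) (b *\<^sub>R u) rs) \<subseteq> range (\<lambda>c. c *\<^sub>R u)"
      using set_dynkin_word[of "a *\<^sub>R u" "b *\<^sub>R u" rs] by blast
  qed (rule length_dynkin_word_ge_2[OF that])
  then show ?thesis
    by (simp add: bch_eq_add_plus_brackets[OF assms(3)] scaleR_add_left)
qed

lemma bch_minus_add_in_subspace:
  assumes "subspace A" "\<And>x y. br x y \<in> A" "1 \<le> D"
  shows "bch br D x y - (x + y) \<in> A"
proof -
  have "nest br (dynkin_word x y rs) \<in> A"
    if rs: "rs \<in> dynkin_words D - {[(1, 0)], [(0, 1)]}" for rs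
  proof -
    obtain a b w where "dynkin_word x y rs = a # b # w"
      using length_dynkin_word_ge_2[OF rs] by (metis One_nat_def Suc_1 Suc_le_length_iff)
    then show ?thesis
      using assms(2) by simp
  qed
  then have "(\<Sum>rs\<in>dynkin_words D - {[(1, 0)], [(0, 1)]}.
      dynkin_coeff rs *\<^sub>R nest br (dynkin_word x y rs)) \<in> A"
    using assms(1) by (intro subspace_sum subspace_scale) auto
  then show ?thesis
    unfolding bch_eq_add_plus_brackets[OF assms(3)] by simp
qed

section \<open>Graded polynomial maps on a stratified Lie algebra\<close>

locale stratified_lie_algebra =
  fixes br :: "'v::euclidean_space \<Rightarrow> 'v \<Rightarrow> 'v" and V :: "nat \<Rightarrow> 'v set" and m :: nat
  assumes stratified: "stratified br V m"
begin

lemma stratified_parts: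
  "lie_bracket br"
  "\<forall>j\<in>{1..m+1}. subspace (V j)"
  "\<forall>v. \<exists>!w. (\<forall>j\<in>{1..m+1}. w j \<in> V j) \<and> (\<forall>j. j \<notin> {1..m+1} \<longrightarrow> w j = 0) \<and> v = (\<Sum>j=1..m+1. w j)"
  "\<forall>i\<in>{1..m+1}. \<forall>j\<in>{1..m+1}. i + j \<le> m + 1 \<longrightarrow> (\<forall>x\<in>V i. \<forall>y\<in>V j. br x y \<in> V (i + j))"
  "\<forall>i\<in>{1..m+1}. \<forall>j\<in>{1..m+1}. i + j > m + 1 \<longrightarrow> (\<forall>x\<in>V i. \<forall>y\<in>V j. br x y = 0)"
  by (insert stratified, unfold stratified_def, (elim conjE, assumption)+)

lemma bilinear_br: "bilinear br"
  using stratified_parts(1) unfolding lie_bracket_def by (elim conjE)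

lemma br_self: "br x x = 0"
  using stratified_parts(1) unfolding lie_bracket_def by simp

lemma bounded_bilinear_br: "bounded_bilinear br"
  using bilinear_br bilinear_conv_bounded_bilinear by blast

lemma subspace_V: "j \<in> {1..m+1} \<Longrightarrow> subspace (V j)"
  using stratified_parts(2) by simp

lemma br_V_mem:
  assumes "i \<in> {1..m+1}" "j \<in> {1..m+1}" "i + j \<le> m + 1" "x \<in> V i" "y \<in> V j"
  shows "br x y \<in> V (i + j)"
  using stratified_parts(4) assms by blast

lemma br_V_zero:
  assumes "i \<in> {1..m+1}" "j \<in> {1..m+1}" "m + 1 < i + j" "x \<in> V i" "y \<in> V j"
  shows "br x y = 0"
  using stratified_parts(5) assms by blast

lemma zero_in_V: "j \<in> {1..m+1} \<Longrightarrow> 0 \<in> V j"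
  using subspace_V subspace_0 by blast

lemma unique_decomposition:
  "\<exists>!w. (\<forall>j\<in>{1..m+1}. w j \<in> V j) \<and> (\<forall>j. j \<notin> {1..m+1} \<longrightarrow> w j = 0) \<and> v = (\<Sum>j=1..m+1. w j)"
  using stratified_parts(3) by (rule spec)

definition stratum :: "nat \<Rightarrow> 'v set" where
  "stratum j = (if j \<in> {1..m+1} then V j else {0})"

lemma zero_in_stratum [simp]: "0 \<in> stratum j"
  unfolding stratum_def using zero_in_V by simp

lemma br_stratum:
  assumes "x \<in> stratum i" "y \<in> stratum j"
  shows "br x y \<in> stratum (i + j)"
proof (cases "i \<in> {1..m+1} \<and> j \<in> {1..m+1}")
  case True
  then show ?thesis
    using br_V_mem[of i j x y] br_V_zero[of i j x y] assms unfolding stratum_def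
    by (cases "i + j \<le> m + 1") auto
next
  case False
  then have "x = 0 \<or> y = 0"
    using assms unfolding stratum_def by (auto split: if_splits)
  then show ?thesis
    using bilinear_lzero[OF bilinear_br] bilinear_rzero[OF bilinear_br] by auto
qed

definition higher_strata :: "'v set" where
  "higher_strata = span (\<Union>j\<in>{2..m+1}. V j)"

lemma subspace_higher_strata: "subspace higher_strata"
  unfolding higher_strata_def by (rule subspace_span)

lemma br_in_higher_strata: "br x y \<in> higher_strata"
proof -
  obtain wx where wx: "\<forall>j\<in>{1..m+1}. wx j \<in> V j" "x = (\<Sum>j=1..m+1. wx j)"
    using unique_decomposition by blast
  obtain wy where wy: "\<forall>j\<in>{1..m+1}. wy j \<in> V j" "y = (\<Sum>j=1..m+1. wy j)"
    using unique_decomposition by blast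
  have "br (wx i) (wy j) \<in> higher_strata" if "i \<in> {1..m+1}" "j \<in> {1..m+1}" for i j
  proof (cases "i + j \<le> m + 1")
    case True
    then have "br (wx i) (wy j) \<in> V (i + j)" "i + j \<in> {2..m+1}"
      using br_V_mem that wx wy by auto
    then show ?thesis
      unfolding higher_strata_def by (meson UN_I span_base)
  next
    case False
    then show ?thesis
      using br_V_zero[of i j] that wx wy span_zero unfolding higher_strata_def by auto
  qed
  then show ?thesis
    unfolding wx(2) wy(2) bilinear_sum[OF bilinear_br] higher_strata_def
    by (auto intro: span_sum)
qed

lemma higher_strata_decomposition:
  assumes "z \<in> higher_strata"
  shows "\<exists>w. (\<forall>j\<in>{2..m+1}. w j \<in> V j) \<and> z = (\<Sum>j=2..m+1. w j)"
  using assms unfolding higher_strata_def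
proof (induction rule: span_induct_alt)
  case base
  show ?case
    by (intro exI[of _ "\<lambda>_. 0"]) (auto intro: zero_in_V)
next
  case (step c x y)
  then obtain k where k: "k \<in> {2..m+1}" "x \<in> V k"
    by blast
  obtain w where w: "\<forall>j\<in>{2..m+1}. w j \<in> V j" "y = (\<Sum>j=2..m+1. w j)"
    using step.IH by blast
  let ?w = "w(k := c *\<^sub>R x + w k)"
  have "\<forall>j\<in>{2..m+1}. ?w j \<in> V j"
    using w(1) k subspace_V[of k] by (auto intro: subspace_add subspace_scale)
  moreover have "c *\<^sub>R x + y = (\<Sum>j=2..m+1. ?w j)"
    using k unfolding w(2) by (simp add: sum.remove[of _ k] algebra_simps)
  ultimately show ?case
    by blast
qed

lemma V1_inter_higher_strata:
  assumes "z \<in> V 1" "z \<in> higher_strata"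
  shows "z = 0"
proof -
  obtain w where w: "\<forall>j\<in>{2..m+1}. w j \<in> V j" "z = (\<Sum>j=2..m+1. w j)"
    using higher_strata_decomposition[OF assms(2)] by blast
  define w1 where "w1 j = (if j = 1 then z else 0)" for j :: nat
  define w2 where "w2 j = (if j \<in> {2..m+1} then w j else 0)" for j
  have "(\<Sum>j=1..m+1. w2 j) = (\<Sum>j=2..m+1. w2 j)"
    by (rule sum.mono_neutral_right) (auto simp: w2_def)
  also have "\<dots> = z"
    unfolding w(2) w2_def by simp
  finally have "(\<forall>j\<in>{1..m+1}. w2 j \<in> V j) \<and> (\<forall>j. j \<notin> {1..m+1} \<longrightarrow> w2 j = 0) \<and> z = (\<Sum>j=1..m+1. w2 j)"
    unfolding w2_def using w(1) by (auto intro: zero_in_V)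
  moreover have "(\<forall>j\<in>{1..m+1}. w1 j \<in> V j) \<and> (\<forall>j. j \<notin> {1..m+1} \<longrightarrow> w1 j = 0) \<and> z = (\<Sum>j=1..m+1. w1 j)"
    unfolding w1_def using assms(1) by (auto intro: zero_in_V)
  ultimately have "w1 = w2"
    using unique_decomposition[of z] by (elim ex1E) blast
  then have "w1 1 = w2 1"
    by simp
  then show "z = 0"
    unfolding w1_def w2_def by simp
qed

text \<open>The polynomial maps whose \<open>V j\<close>-component is homogeneous of degree \<open>j - a\<close>.\<close>
inductive_set graded_poly :: "nat \<Rightarrow> (real^'n::finite \<Rightarrow> 'v) set" for a :: nat where
  zero: "(\<lambda>t. 0) \<in> graded_poly a"
| monomial: "homog_poly k h \<Longrightarrow> w \<in> stratum (k + a) \<Longrightarrow> (\<lambda>t. h t *\<^sub>R w) \<in> graded_poly a"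
| add: "F \<in> graded_poly a \<Longrightarrow> G \<in> graded_poly a \<Longrightarrow> (\<lambda>t. F t + G t) \<in> graded_poly a"

lemma graded_poly_scaleR: "F \<in> graded_poly a \<Longrightarrow> (\<lambda>t. c *\<^sub>R F t) \<in> graded_poly a"
proof (induction rule: graded_poly.induct)
  case (monomial k h w)
  then show ?case
    using graded_poly.monomial[OF homog_poly_cmult[OF monomial(1)]] by simp
qed (auto simp: scaleR_add_right intro: graded_poly.intros)

lemma graded_poly_sum: "(\<And>x. x \<in> I \<Longrightarrow> F x \<in> graded_poly a) \<Longrightarrow> (\<lambda>t. \<Sum>x\<in>I. F x t) \<in> graded_poly a"
  by (induction I rule: infinite_finite_induct) (auto intro: graded_poly.intros)

lemma graded_poly_br_monomial:
  assumes "homog_poly k h" "w \<in> stratum (k + a)" "G \<in> graded_poly b"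
  shows "(\<lambda>t. br (h t *\<^sub>R w) (G t)) \<in> graded_poly (a + b)"
  using assms(3)
proof (induction rule: graded_poly.induct)
  case (monomial k' h' w')
  have "(\<lambda>t. br (h t *\<^sub>R w) (h' t *\<^sub>R w')) = (\<lambda>t. (h t * h' t) *\<^sub>R br w w')"
    by (simp add: bilinear_lmul[OF bilinear_br] bilinear_rmul[OF bilinear_br] mult.commute)
  moreover have "br w w' \<in> stratum ((k + k') + (a + b))"
    using br_stratum[OF assms(2) monomial(2)] by (simp add: algebra_simps)
  ultimately show ?case
    using graded_poly.monomial[OF homog_poly_mult[OF assms(1) monomial(1)]] by simp
qed (auto simp: bilinear_rzero[OF bilinear_br] bilinear_radd[OF bilinear_br] intro: graded_poly.intros)

lemma graded_poly_br:
  "F \<in> graded_poly a \<Longrightarrow> G \<in> graded_poly b \<Longrightarrow> (\<lambda>t. br (F t) (G t)) \<in> graded_poly (a + b)"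
proof (induction rule: graded_poly.induct)
  case (monomial k h w)
  then show ?case
    using graded_poly_br_monomial by blast
qed (auto simp: bilinear_lzero[OF bilinear_br] bilinear_ladd[OF bilinear_br] intro: graded_poly.intros)

lemma graded_poly_functional:
  assumes l: "linear l" and vanish: "\<forall>i\<in>{1..m+1}. i \<noteq> k + a \<longrightarrow> (\<forall>x\<in>V i. l x = 0)"
    and F: "F \<in> graded_poly a"
  shows "homog_poly k (\<lambda>t. l (F t))"
  using F
proof (induction rule: graded_poly.induct)
  case zero
  then show ?case
    using homog_poly_0 linear_0[OF l] by simp
next
  case (monomial k' h w)
  have "(\<lambda>t. l (h t *\<^sub>R w)) = (\<lambda>t. l w * h t)"
    using linear_scale[OF l] by (simp add: mult.commute)
  moreover have "l w = 0" if "k' \<noteq> k"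
    using monomial(2) that vanish linear_0[OF l] unfolding stratum_def by (auto split: if_splits)
  ultimately show ?case
    using homog_poly_cmult[OF monomial(1)] homog_poly_0 by (cases "k' = k") auto
next
  case (add F G)
  then show ?case
    using homog_poly_add linear_add[OF l] by simp
qed

lemma graded_poly_line_differentiable:
  assumes l: "linear l" and F: "F \<in> graded_poly a"
  shows "(\<lambda>u. l (F (t + u *\<^sub>R v))) differentiable (at x)"
  using F
proof (induction rule: graded_poly.induct)
  case (monomial k h w)
  then show ?case
    using homog_poly_line_differentiable[OF monomial(1)] by (simp add: linear_scale[OF l])
qed (simp_all add: linear_0[OF l] linear_add[OF l])

definition graded_family :: "(real \<Rightarrow> real^'n::finite \<Rightarrow> 'v) \<Rightarrow> bool" where
  "graded_family \<Phi> \<longleftrightarrow> (\<lambda>t. \<Phi> 0 t) \<in> graded_poly 0 \<and>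
     (\<exists>\<Phi>'\<in>graded_poly 1. \<forall>t. ((\<lambda>\<tau>. \<Phi> \<tau> t) has_vector_derivative \<Phi>' t) (at 0))"

lemma graded_family_affine:
  assumes "F \<in> graded_poly 0" "G \<in> graded_poly 1"
  shows "graded_family (\<lambda>\<tau> t. F t + \<tau> *\<^sub>R G t)"
  unfolding graded_family_def
proof (intro conjI bexI[of _ G] allI)
  show "((\<lambda>\<tau>. F t + \<tau> *\<^sub>R G t) has_vector_derivative G t) (at 0)" for t
    by (auto intro!: derivative_eq_intros)
qed (use assms in simp_all)

lemma graded_family_add:
  assumes "graded_family A" "graded_family B"
  shows "graded_family (\<lambda>\<tau> t. A \<tau> t + B \<tau> t)"
proof -
  obtain A' B' where "A' \<in> graded_poly 1" "\<And>t. ((\<lambda>\<tau>. A \<tau> t) has_vector_derivative A' t) (at 0)"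
    and "B' \<in> graded_poly 1" "\<And>t. ((\<lambda>\<tau>. B \<tau> t) has_vector_derivative B' t) (at 0)"
    using assms unfolding graded_family_def by blast
  then show ?thesis
    using assms unfolding graded_family_def
    by (intro conjI bexI[of _ "\<lambda>t. A' t + B' t"] allI has_vector_derivative_add)
      (auto intro: graded_poly.add)
qed

lemma graded_family_scaleR:
  assumes "graded_family A"
  shows "graded_family (\<lambda>\<tau> t. c *\<^sub>R A \<tau> t)"
proof -
  obtain A' where "A' \<in> graded_poly 1" "\<And>t. ((\<lambda>\<tau>. A \<tau> t) has_vector_derivative A' t) (at 0)"
    using assms unfolding graded_family_def by blast
  then show ?thesis
    using assms unfolding graded_family_def
    by (intro conjI bexI[of _ "\<lambda>t. c *\<^sub>R A' t"] allI
        bounded_linear.has_vector_derivative[OF bounded_linear_scaleR_right])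
      (auto intro: graded_poly_scaleR)
qed

lemma graded_family_sum:
  "(\<And>x. x \<in> I \<Longrightarrow> graded_family (F x)) \<Longrightarrow> graded_family (\<lambda>\<tau> t. \<Sum>x\<in>I. F x \<tau> t)"
proof (induction I rule: infinite_finite_induct)
  case (insert x I)
  then show ?case
    using graded_family_add[of "F x" "\<lambda>\<tau> t. \<Sum>x\<in>I. F x \<tau> t"] by simp
qed (use graded_family_affine[OF graded_poly.zero graded_poly.zero] in simp_all)

lemma graded_family_br:
  assumes "graded_family A" "graded_family B"
  shows "graded_family (\<lambda>\<tau> t. br (A \<tau> t) (B \<tau> t))"
proof -
  obtain A' B' where A': "A' \<in> graded_poly 1" "\<And>t. ((\<lambda>\<tau>. A \<tau> t) has_vector_derivative A' t) (at 0)"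
    and B': "B' \<in> graded_poly 1" "\<And>t. ((\<lambda>\<tau>. B \<tau> t) has_vector_derivative B' t) (at 0)"
    using assms unfolding graded_family_def by blast
  have A0: "(\<lambda>t. A 0 t) \<in> graded_poly 0" and B0: "(\<lambda>t. B 0 t) \<in> graded_poly 0"
    using assms unfolding graded_family_def by blast+
  show ?thesis
    unfolding graded_family_def
  proof (intro conjI bexI[of _ "\<lambda>t. br (A 0 t) (B' t) + br (A' t) (B 0 t)"] allI)
    show "(\<lambda>t. br (A 0 t) (B 0 t)) \<in> graded_poly 0"
      using graded_poly_br[OF A0 B0] by simp
    show "(\<lambda>t. br (A 0 t) (B' t) + br (A' t) (B 0 t)) \<in> graded_poly 1"
      using graded_poly_br[OF A0 B'(1)] graded_poly_br[OF A'(1) B0] by (intro graded_poly.add) simp_all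
    show "((\<lambda>\<tau>. br (A \<tau> t) (B \<tau> t)) has_vector_derivative br (A 0 t) (B' t) + br (A' t) (B 0 t)) (at 0)" for t
      using bounded_bilinear.has_vector_derivative[OF bounded_bilinear_br A'(2) B'(2)] .
  qed
qed

lemma graded_family_nest:
  "(\<And>\<Phi>. \<Phi> \<in> set \<Phi>s \<Longrightarrow> graded_family \<Phi>) \<Longrightarrow> graded_family (\<lambda>\<tau> t. nest br (map (\<lambda>\<Phi>. \<Phi> \<tau> t) \<Phi>s))"
proof (induction \<Phi>s)
  case Nil
  then show ?case
    using graded_family_affine[OF graded_poly.zero graded_poly.zero] by simp
next
  case (Cons \<Phi> \<Phi>s)
  then show ?case
    by (cases "\<Phi>s = []") (auto simp: nest_Cons intro: graded_family_br)
qed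

lemma graded_family_bch:
  assumes "graded_family A" "graded_family B"
  shows "graded_family (\<lambda>\<tau> t. bch br D (A \<tau> t) (B \<tau> t))"
proof -
  have "graded_family (\<lambda>\<tau> t. \<Sum>rs\<in>dynkin_words D.
      dynkin_coeff rs *\<^sub>R nest br (map (\<lambda>\<Phi>. \<Phi> \<tau> t) (dynkin_word A B rs)))"
    using assms set_dynkin_word[of A B]
    by (intro graded_family_sum graded_family_scaleR graded_family_nest) auto
  then show ?thesis
    unfolding bch_eq_sum_dynkin_words map_dynkin_word .
qed

end

section \<open>The induced representation\<close>

lemma independent_span_diff_inter:
  fixes B :: "'a::euclidean_space set"
  assumes "independent B" "S \<subseteq> B" "v \<in> span S" "v \<in> span (B - S)"
  shows "v = 0"
proof -
  have fB: "finite B"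
    using assms(1) unfolding independent_explicit by (rule conjunct1)
  obtain a where a: "v = (\<Sum>x\<in>S. a x *\<^sub>R x)"
    using assms(3) span_finite[OF finite_subset[OF assms(2) fB]] by auto
  obtain b where b: "v = (\<Sum>x\<in>B - S. b x *\<^sub>R x)"
    using assms(4) span_finite[OF finite_Diff[OF fB]] by auto
  define c where "c x = (if x \<in> S then a x else - b x)" for x
  have "(\<Sum>x\<in>S. c x *\<^sub>R x) = v"
    unfolding a by (rule sum.cong) (auto simp: c_def)
  moreover have "(\<Sum>x\<in>B - S. c x *\<^sub>R x) = - v"
    unfolding b sum_negf[symmetric] by (rule sum.cong) (auto simp: c_def)
  moreover have "(\<Sum>x\<in>B. c x *\<^sub>R x) = (\<Sum>x\<in>B - S. c x *\<^sub>R x) + (\<Sum>x\<in>S. c x *\<^sub>R x)"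
    by (rule sum.subset_diff[OF assms(2) fB])
  ultimately have "(\<Sum>x\<in>B. c x *\<^sub>R x) = 0"
    by simp
  then have "\<forall>x\<in>B. c x = 0"
    using assms(1) unfolding independent_explicit by blast
  then have "\<forall>x\<in>S. a x = 0"
    using assms(2) unfolding c_def by (metis subsetD)
  then show ?thesis
    unfolding a by simp
qed

lemma linear_e_map: "linear (e_map Y)"
  unfolding e_map_def by (rule linearI) (simp_all add: scaleR_add_left sum.distrib scaleR_sum_right)

lemma e_map_axis: "e_map Y (axis j 1) = Y j"
proof -
  have "e_map Y (axis j 1) = (\<Sum>i\<in>UNIV. if i = j then Y i else 0)"
    unfolding e_map_def by (rule sum.cong) (auto simp: axis_def)
  then show ?thesis
    by simp
qed

lemma e_map_eq_0_imp_eq_0: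
  fixes Y :: "'n::finite \<Rightarrow> 'v::euclidean_space"
  assumes "inj Y" "independent (range Y)" "e_map Y u = 0"
  shows "u = 0"
proof -
  define c where "c x = u $ inv Y x" for x
  have "(\<Sum>x\<in>range Y. c x *\<^sub>R x) = (\<Sum>i\<in>UNIV. c (Y i) *\<^sub>R Y i)"
    using sum.reindex[OF assms(1), of "\<lambda>x. c x *\<^sub>R x"] by simp
  also have "\<dots> = e_map Y u"
    unfolding e_map_def c_def using assms(1) by simp
  finally have "(\<Sum>x\<in>range Y. c x *\<^sub>R x) = 0"
    using assms(3) by simp
  then have "\<forall>x\<in>range Y. c x = 0"
    using assms(2) unfolding independent_explicit by blast
  then have "c (Y i) = 0" for i
    by blast
  then have "u $ i = 0" for i
    unfolding c_def using inv_f_f[OF assms(1)] by simp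
  then show "u = 0"
    by (simp add: vec_eq_iff)
qed

locale induced_representation = stratified_lie_algebra br V m
  for br :: "'v::euclidean_space \<Rightarrow> 'v \<Rightarrow> 'v" and V m +
  fixes X :: "nat \<Rightarrow> 'v" and p :: nat and S :: "'v set" and Y :: "'n::finite \<Rightarrow> 'v"
  assumes basis: "basis_enum X p (V 1)"
    and S_subset: "S \<subseteq> X ` {..<p}"
    and Y_bij: "bij_betw Y UNIV S"
begin

definition ideal_h :: "'v set" where
  "ideal_h = span ((X ` {..<p} - S) \<union> (\<Union>j\<in>{2..m+1}. V j))"

lemma independent_basis: "independent (X ` {..<p})"
  using basis unfolding basis_enum_def by blast

lemma span_basis: "span (X ` {..<p}) = V 1"
  using basis unfolding basis_enum_def by blast

lemma inj_on_X: "inj_on X {..<p}"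
  using basis unfolding basis_enum_def by blast

lemma inj_Y: "inj Y" and range_Y: "range Y = S"
  using Y_bij unfolding bij_betw_def by auto

lemma X_in_V1: "i < p \<Longrightarrow> X i \<in> V 1"
  using span_superset[of "X ` {..<p}"] unfolding span_basis by blast

lemma span_subset_V1: "T \<subseteq> X ` {..<p} \<Longrightarrow> span T \<subseteq> V 1"
  using span_mono[of T "X ` {..<p}"] unfolding span_basis .

lemma Y_in_V1: "Y j \<in> V 1"
  using span_subset_V1[OF S_subset] span_superset[of S] range_Y by blast

lemma subspace_ideal_h: "subspace ideal_h"
  unfolding ideal_h_def by (rule subspace_span)

lemma higher_strata_subset_ideal_h: "higher_strata \<subseteq> ideal_h"
  unfolding higher_strata_def ideal_h_def by (rule span_mono) auto

lemma diff_in_ideal_h_iff: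
  assumes "a - b \<in> ideal_h"
  shows "a \<in> ideal_h \<longleftrightarrow> b \<in> ideal_h"
proof
  assume "a \<in> ideal_h"
  then have "a - (a - b) \<in> ideal_h"
    using subspace_diff[OF subspace_ideal_h] assms by blast
  then show "b \<in> ideal_h"
    by simp
next
  assume "b \<in> ideal_h"
  then have "(a - b) + b \<in> ideal_h"
    using subspace_add[OF subspace_ideal_h] assms by blast
  then show "a \<in> ideal_h"
    by simp
qed

lemma span_S_inter_ideal_h:
  assumes "v \<in> span S" "v \<in> ideal_h"
  shows "v = 0"
proof -
  obtain w z where wz: "v = w + z" "w \<in> span (X ` {..<p} - S)" "z \<in> higher_strata"
    using assms(2) unfolding ideal_h_def span_Un higher_strata_def by blast
  have "v \<in> V 1" "w \<in> V 1"
    using assms(1) wz(2) span_subset_V1[OF S_subset] span_subset_V1[of "X ` {..<p} - S"] by auto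
  then have "v - w \<in> V 1"
    using subspace_diff[OF subspace_V[of 1]] by simp
  then have "z \<in> V 1"
    using wz(1) by (simp add: add_diff_cancel_left')
  then have "z = 0"
    using V1_inter_higher_strata wz(3) by blast
  then show ?thesis
    using independent_span_diff_inter[OF independent_basis S_subset assms(1)] wz by simp
qed

lemma e_map_in_ideal_h_iff: "e_map Y u \<in> ideal_h \<longleftrightarrow> u = 0"
proof
  assume u: "e_map Y u \<in> ideal_h"
  have "e_map Y u \<in> span S"
    unfolding e_map_def range_Y[symmetric] by (intro span_sum span_scale span_base) auto
  then have "e_map Y u = 0"
    using span_S_inter_ideal_h u by blast
  moreover have "independent (range Y)"
    using independent_mono[OF independent_basis S_subset] range_Y by simp
  ultimately show "u = 0"
    using e_map_eq_0_imp_eq_0 inj_Y by blast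
qed (simp add: linear_0[OF linear_e_map] subspace_0[OF subspace_ideal_h])

definition shift :: "nat \<Rightarrow> real^'n" where
  "shift i = (if X i \<in> S then axis (inv Y (X i)) 1 else 0)"

lemma X_minus_shift_in_ideal_h:
  assumes "i < p"
  shows "X i - e_map Y (shift i) \<in> ideal_h"
proof (cases "X i \<in> S")
  case True
  then have "e_map Y (shift i) = X i"
    using range_Y by (simp add: shift_def e_map_axis f_inv_into_f)
  then show ?thesis
    using subspace_0[OF subspace_ideal_h] by simp
next
  case False
  then show ?thesis
    using assms unfolding shift_def ideal_h_def
    by (simp add: linear_0[OF linear_e_map] span_base)
qed

lemma coordS_scaleR_X:
  assumes "i < p"
  shows "coordS br m ideal_h Y (\<tau> *\<^sub>R X i) = \<tau> *\<^sub>R shift i"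
proof -
  have "gmult br m (- e_map Y u) (\<tau> *\<^sub>R X i) \<in> ideal_h \<longleftrightarrow> u = \<tau> *\<^sub>R shift i" for u
  proof -
    let ?g = "gmult br m (- e_map Y u) (\<tau> *\<^sub>R X i)"
    have "?g - (- e_map Y u + \<tau> *\<^sub>R X i) \<in> higher_strata"
      unfolding gmult_def
      by (intro bch_minus_add_in_subspace subspace_higher_strata br_in_higher_strata) simp
    then have bch_part: "?g - (- e_map Y u + \<tau> *\<^sub>R X i) \<in> ideal_h"
      using higher_strata_subset_ideal_h by blast
    have shift_part: "\<tau> *\<^sub>R (X i - e_map Y (shift i)) \<in> ideal_h"
      using subspace_scale[OF subspace_ideal_h X_minus_shift_in_ideal_h[OF assms]] .
    have eq: "?g - e_map Y (\<tau> *\<^sub>R shift i - u)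
        = (?g - (- e_map Y u + \<tau> *\<^sub>R X i)) + \<tau> *\<^sub>R (X i - e_map Y (shift i))"
      by (simp add: linear_diff[OF linear_e_map] linear_scale[OF linear_e_map] algebra_simps)
    have "?g - e_map Y (\<tau> *\<^sub>R shift i - u) \<in> ideal_h"
      unfolding eq by (rule subspace_add[OF subspace_ideal_h bch_part shift_part])
    then show ?thesis
      using diff_in_ideal_h_iff e_map_in_ideal_h_iff by auto
  qed
  then show ?thesis
    unfolding coordS_def by (intro the_equality) auto
qed

definition cocycle :: "nat \<Rightarrow> real \<Rightarrow> real^'n \<Rightarrow> 'v" where
  "cocycle i \<tau> t = gmult br m (gmult br m (e_map Y t) (\<tau> *\<^sub>R X i)) (- e_map Y (t + \<tau> *\<^sub>R shift i))"

definition cocycle_deriv :: "nat \<Rightarrow> real^'n \<Rightarrow> 'v" where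
  "cocycle_deriv i t = vector_derivative (\<lambda>\<tau>. cocycle i \<tau> t) (at 0)"

lemma rep_pi_scaleR_X:
  "i < p \<Longrightarrow> rep_pi br m ideal_h Y \<nu> (\<tau> *\<^sub>R X i) g t =
     exp (\<i> * complex_of_real (\<nu> (cocycle i \<tau> t))) * g (t + \<tau> *\<^sub>R shift i)"
  unfolding rep_pi_def Let_def coordS_scaleR_X cocycle_def by simp

lemma cocycle_0: "cocycle i 0 t = 0"
proof -
  have "cocycle i 0 t = bch br (m + 1) (bch br (m + 1) (1 *\<^sub>R e_map Y t) (0 *\<^sub>R e_map Y t)) ((-1) *\<^sub>R e_map Y t)"
    unfolding cocycle_def gmult_def by simp
  also have "\<dots> = 0"
    by (simp only: bch_collinear[OF bilinear_br br_self]) simp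
  finally show ?thesis .
qed

lemma e_map_graded: "(\<lambda>t. e_map Y t) \<in> graded_poly 0"
  unfolding e_map_def
proof (rule graded_poly_sum)
  show "(\<lambda>t. (t $ j) *\<^sub>R Y j) \<in> graded_poly 0" for j
    using Y_in_V1 by (intro graded_poly.monomial[OF homog_poly_coordinate]) (simp add: stratum_def)
qed

lemma constant_graded: "w \<in> V 1 \<Longrightarrow> (\<lambda>t. w) \<in> graded_poly 1"
  using graded_poly.monomial[OF homog_poly_const[of 1], of w 1] by (simp add: stratum_def)

lemma graded_family_cocycle:
  assumes "i < p"
  shows "graded_family (cocycle i)"
proof -
  have "e_map Y (shift i) \<in> V 1"
    unfolding e_map_def using Y_in_V1 subspace_V[of 1]
    by (intro subspace_sum subspace_scale) auto
  then have "graded_family (\<lambda>\<tau> t. bch br (m + 1) (bch br (m + 1) (e_map Y t + \<tau> *\<^sub>R 0) (0 + \<tau> *\<^sub>R X i))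
      ((-1) *\<^sub>R e_map Y t + \<tau> *\<^sub>R ((-1) *\<^sub>R e_map Y (shift i))))"
    using e_map_graded constant_graded X_in_V1[OF assms]
    by (intro graded_family_bch graded_family_affine graded_poly_scaleR graded_poly.zero) auto
  moreover have "cocycle i = (\<lambda>\<tau> t. bch br (m + 1) (bch br (m + 1) (e_map Y t + \<tau> *\<^sub>R 0) (0 + \<tau> *\<^sub>R X i))
      ((-1) *\<^sub>R e_map Y t + \<tau> *\<^sub>R ((-1) *\<^sub>R e_map Y (shift i))))"
    unfolding cocycle_def gmult_def
    by (simp add: fun_eq_iff linear_add[OF linear_e_map] linear_scale[OF linear_e_map])
  ultimately show ?thesis
    by simp
qed

lemma cocycle_deriv:
  assumes "i < p"
  shows "cocycle_deriv i \<in> graded_poly 1"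
    and "((\<lambda>\<tau>. cocycle i \<tau> t) has_vector_derivative cocycle_deriv i t) (at 0)"
proof -
  obtain \<Phi>' where \<Phi>': "\<Phi>' \<in> graded_poly 1" "\<And>t. ((\<lambda>\<tau>. cocycle i \<tau> t) has_vector_derivative \<Phi>' t) (at 0)"
    using graded_family_cocycle[OF assms] unfolding graded_family_def by blast
  then have "cocycle_deriv i = \<Phi>'"
    unfolding cocycle_deriv_def by (simp add: fun_eq_iff vector_derivative_at)
  then show "cocycle_deriv i \<in> graded_poly 1"
    and "((\<lambda>\<tau>. cocycle i \<tau> t) has_vector_derivative cocycle_deriv i t) (at 0)"
    using \<Phi>' by simp_all
qed

lemma has_vector_derivative_phase:
  assumes \<nu>: "linear \<nu>" and i: "i < p"
  shows "((\<lambda>\<tau>. exp (\<i> * complex_of_real (\<nu> (cocycle i \<tau> t)))) has_vector_derivative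
    \<i> * complex_of_real (\<nu> (cocycle_deriv i t))) (at 0)"
proof -
  have "((\<lambda>\<tau>. \<nu> (cocycle i \<tau> t)) has_field_derivative \<nu> (cocycle_deriv i t)) (at 0)"
    using bounded_linear.has_vector_derivative[OF linear_conv_bounded_linear[THEN iffD1, OF \<nu>]
        cocycle_deriv(2)[OF i]]
    by (simp add: has_real_derivative_iff_has_vector_derivative)
  then have "((\<lambda>\<tau>. \<i> * complex_of_real (\<nu> (cocycle i \<tau> t))) has_vector_derivative
      \<i> * complex_of_real (\<nu> (cocycle_deriv i t))) (at 0)"
    using has_vector_derivative_mult[OF has_vector_derivative_const[of "\<i>"] has_vector_derivative_of_real]
    by simp
  from field_vector_diff_chain_at[OF this DERIV_exp]
  show ?thesis
    using cocycle_0 linear_0[OF \<nu>] by (simp add: o_def)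
qed

lemma d_rep_pi_X_in_S:
  assumes \<nu>: "linear \<nu>" and i: "i < p" and XY: "X i = Y j"
    and g: "(\<lambda>u. g (t + u *\<^sub>R axis j 1)) differentiable (at 0)"
  shows "d_rep_pi br m ideal_h Y \<nu> (X i) g t =
    partial j g t + \<i> * complex_of_real (\<nu> (cocycle_deriv i t)) * g t"
proof -
  have "shift i = axis j 1"
    unfolding shift_def XY using range_Y inj_Y by (auto simp: inv_f_f)
  moreover have "((\<lambda>u. g (t + u *\<^sub>R axis j 1)) has_vector_derivative partial j g t) (at 0)"
    unfolding partial_def using g vector_derivative_works by blast
  ultimately have "((\<lambda>\<tau>. rep_pi br m ideal_h Y \<nu> (\<tau> *\<^sub>R X i) g t) has_vector_derivative
      partial j g t + \<i> * complex_of_real (\<nu> (cocycle_deriv i t)) * g t) (at 0)"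
    unfolding rep_pi_scaleR_X[OF i]
    using has_vector_derivative_mult[OF has_vector_derivative_phase[OF \<nu> i]]
      cocycle_0 linear_0[OF \<nu>] by fastforce
  then show ?thesis
    unfolding d_rep_pi_def by (rule vector_derivative_at)
qed

lemma d_rep_pi_X_notin_S:
  assumes \<nu>: "linear \<nu>" and i: "i < p" and XS: "X i \<notin> S"
  shows "d_rep_pi br m ideal_h Y \<nu> (X i) g t = \<i> * complex_of_real (\<nu> (cocycle_deriv i t)) * g t"
proof -
  have "((\<lambda>\<tau>. rep_pi br m ideal_h Y \<nu> (\<tau> *\<^sub>R X i) g t) has_vector_derivative
      \<i> * complex_of_real (\<nu> (cocycle_deriv i t)) * g t) (at 0)"
    unfolding rep_pi_scaleR_X[OF i] using XS
    using has_vector_derivative_mult[OF has_vector_derivative_phase[OF \<nu> i] has_vector_derivative_const]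
    by (simp add: shift_def)
  then show ?thesis
    unfolding d_rep_pi_def by (rule vector_derivative_at)
qed

definition basis_index :: "'n \<Rightarrow> nat" where
  "basis_index j = inv_into {..<p} X (Y j)"

definition complement_indices :: "nat set" where
  "complement_indices = {i. i < p \<and> X i \<notin> S}"

lemma basis_index: "basis_index j < p" "X (basis_index j) = Y j"
proof -
  have Yj: "Y j \<in> X ` {..<p}"
    using range_Y S_subset by blast
  show "basis_index j < p"
    using inv_into_into[OF Yj] unfolding basis_index_def by simp
  show "X (basis_index j) = Y j"
    using f_inv_into_f[OF Yj] unfolding basis_index_def .
qed

lemma inj_basis_index: "inj basis_index"
  by (metis basis_index(2) inj_Y injD injI)

lemma range_basis_index: "range basis_index = {i. i < p \<and> X i \<in> S}"
proof
  show "{i. i < p \<and> X i \<in> S} \<subseteq> range basis_index"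
  proof
    fix i assume i: "i \<in> {i. i < p \<and> X i \<in> S}"
    then obtain j where "Y j = X i"
      using range_Y by (metis (no_types, lifting) imageE mem_Collect_eq)
    then have "basis_index j = i"
      unfolding basis_index_def using i inj_on_X by (simp add: inv_into_f_f)
    then show "i \<in> range basis_index"
      by blast
  qed
qed (use basis_index range_Y in auto)

lemma lessThan_p_eq: "{..<p} = range basis_index \<union> complement_indices"
  and range_basis_index_disjoint: "range basis_index \<inter> complement_indices = {}"
  unfolding range_basis_index complement_indices_def by auto

lemma card_complement_indices: "card complement_indices = p - card S"
proof -
  have "card (range basis_index) = card S"
    using card_image[OF inj_basis_index] bij_betw_same_card[OF Y_bij] by simp
  moreover have "p = card (range basis_index) + card complement_indices"
    using card_Un_disjoint[of "range basis_index" complement_indices] lessThan_p_eq range_basis_index_disjoint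
    by (metis card_lessThan finite_Un finite_lessThan)
  ultimately show ?thesis
    by simp
qed

definition twisted_partial :: "('v \<Rightarrow> real) \<Rightarrow> 'n \<Rightarrow> (real^'n \<Rightarrow> complex) \<Rightarrow> real^'n \<Rightarrow> complex" where
  "twisted_partial \<nu> j g t = partial j g t + \<i> * complex_of_real (\<nu> (cocycle_deriv (basis_index j) t)) * g t"

lemma d_rep_pi_Y:
  assumes "linear \<nu>" "\<And>t. (\<lambda>u. g (t + u *\<^sub>R axis j 1)) differentiable (at 0)"
  shows "d_rep_pi br m ideal_h Y \<nu> (Y j) g = twisted_partial \<nu> j g"
  using d_rep_pi_X_in_S[OF assms(1) basis_index] assms(2)
  unfolding twisted_partial_def basis_index(2) by auto

lemma twisted_partial_line_differentiable:
  assumes \<nu>: "linear \<nu>" and f: "smooth_fun f"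
  shows "(\<lambda>u. twisted_partial \<nu> j f (t + u *\<^sub>R axis j 1)) differentiable (at 0)"
proof -
  have "(\<lambda>u. \<nu> (cocycle_deriv (basis_index j) (t + u *\<^sub>R axis j 1))) differentiable (at 0)"
    using graded_poly_line_differentiable[OF \<nu> cocycle_deriv(1)[OF basis_index(1)]] .
  moreover have "(\<lambda>u. f (t + u *\<^sub>R axis j 1)) differentiable (at 0)"
    using smooth_fun_line_differentiable[OF f, of "[]"] by simp
  moreover have "(\<lambda>u. partial j f (t + u *\<^sub>R axis j 1)) differentiable (at 0)"
    using smooth_fun_line_differentiable[OF f, of "[j]"] by simp
  ultimately show ?thesis
    unfolding twisted_partial_def
    by (intro differentiable_add differentiable_mult differentiable_const
      differentiable_compose[OF of_real_differentiable])
qed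

lemma sublaplacian_sum_of_squares:
  assumes \<nu>: "linear \<nu>" and f: "smooth_fun f"
    and en: "bij_betw en {..<p - card S} complement_indices"
  shows "(\<Sum>i<p. d_rep_pi br m ideal_h Y \<nu> (X i) (d_rep_pi br m ideal_h Y \<nu> (X i) f) t) =
    (\<Sum>j\<in>UNIV. twisted_partial \<nu> j (twisted_partial \<nu> j f) t) -
    (\<Sum>k<p - card S. complex_of_real ((\<nu> (cocycle_deriv (en k) t))\<^sup>2) * f t)"
proof -
  let ?dpi = "d_rep_pi br m ideal_h Y \<nu>"
  let ?F = "\<lambda>i. ?dpi (X i) (?dpi (X i) f) t"
  let ?sq = "\<lambda>i. complex_of_real ((\<nu> (cocycle_deriv i t))\<^sup>2) * f t"
  have "(\<Sum>i<p. ?F i) = (\<Sum>i\<in>range basis_index. ?F i) + (\<Sum>i\<in>complement_indices. ?F i)"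
    unfolding lessThan_p_eq
    by (rule sum.union_disjoint[OF _ _ range_basis_index_disjoint]) (simp_all add: complement_indices_def)
  also have "(\<Sum>i\<in>range basis_index. ?F i) = (\<Sum>j\<in>UNIV. ?F (basis_index j))"
    by (simp add: sum.reindex[OF inj_basis_index])
  also have "\<dots> = (\<Sum>j\<in>UNIV. twisted_partial \<nu> j (twisted_partial \<nu> j f) t)"
    using d_rep_pi_Y[OF \<nu>] smooth_fun_line_differentiable[OF f, of "[]"]
      twisted_partial_line_differentiable[OF \<nu> f] basis_index(2) by simp
  also have "(\<Sum>i\<in>complement_indices. ?F i) = (\<Sum>i\<in>complement_indices. - ?sq i)"
    using d_rep_pi_X_notin_S[OF \<nu>] unfolding complement_indices_def
    by (intro sum.cong) (simp_all add: power2_eq_square algebra_simps)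
  also have "\<dots> = (\<Sum>k<p - card S. - ?sq (en k))"
    by (rule sum.reindex_bij_betw[OF en, symmetric])
  finally show ?thesis
    by (simp add: sum_negf)
qed

end

lemma greedy_subset: "greedy P Out R \<Longrightarrow> R \<subseteq> Out \<union> \<Union>P"
proof (induction rule: greedy.induct)
  case (step P x Out R)
  then have "{q \<in> P. x \<in> q} \<noteq> {}"
    unfolding pair_count_def by (metis card.empty not_numeral_le_zero)
  then show ?case
    using step.IH by blast
next
  case (stop P c Out)
  then show ?case by blast
qed

lemma greedy_output_subset: "greedy_output br l B R \<Longrightarrow> R \<subseteq> B"
  unfolding greedy_output_def init_pairs_def by (fastforce dest: greedy_subset)

lemma S_choice_subset: "S_choice br m s B l1 l2 S \<Longrightarrow> S \<subseteq> B"
  unfolding S_choice_def supp_set_def by (metis (no_types, lifting) greedy_output_subset Un_least mem_Collect_eq subsetI)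

theorem theorem2p1:
  fixes br :: "'v::euclidean_space \<Rightarrow> 'v \<Rightarrow> 'v"
    and V :: "nat \<Rightarrow> 'v set" and m s p d1 d2 \<alpha> \<beta> :: nat
    and X Z1 Z2 :: "nat \<Rightarrow> 'v" and l1 l2 :: "'v \<Rightarrow> real"
    and S :: "'v set" and Y :: "'n::finite \<Rightarrow> 'v"
    and la lb :: real
  assumes strat: "stratified br V m"
    and s_lt: "s < m"
    and basisX: "basis_enum X p (V 1)"
    and basisZ1: "basis_enum Z1 d1 (V (s + 1))" and alpha: "\<alpha> < d1"
    and l1_lin: "linear l1"
    and l1_vanish: "\<forall>i\<in>{1..m+1}. i \<noteq> s + 1 \<longrightarrow> (\<forall>x\<in>V i. l1 x = 0)"
    and l1_dual: "\<forall>j<d1. l1 (Z1 j) = (if j = \<alpha> then 1 else 0)"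
    and basisZ2: "basis_enum Z2 d2 (V (m + 1))" and beta: "\<beta> < d2"
    and l2_lin: "linear l2"
    and l2_vanish: "\<forall>i\<in>{1..m}. \<forall>x\<in>V i. l2 x = 0"
    and l2_dual: "\<forall>j<d2. l2 (Z2 j) = (if j = \<beta> then 1 else 0)"
    and l1_br: "\<forall>k\<in>{2..m+1}. \<forall>j\<in>{2..m+1}. \<forall>x\<in>V k. \<forall>y\<in>V j. l1 (br x y) = 0"
    and l2_br: "\<forall>k\<in>{2..m+1}. \<forall>j\<in>{2..m+1}. \<forall>x\<in>V k. \<forall>y\<in>V j. l2 (br x y) = 0"
    and S_def: "S_choice br m s (X ` {..<p}) l1 l2 S"
    and Y_enum: "bij_betw Y UNIV S"
    and la: "la \<noteq> 0" and lb: "lb \<noteq> 0"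
  shows "\<exists>pt qt :: 'n \<Rightarrow> real^'n \<Rightarrow> real. \<exists>pp qq :: nat \<Rightarrow> real^'n \<Rightarrow> real.
     (\<forall>j. homog_poly s (pt j) \<and> homog_poly m (qt j)) \<and>
     (\<forall>k < p - card S. homog_poly s (pp k) \<and> homog_poly m (qq k)) \<and>
     (\<forall>f. smooth_fun f \<longrightarrow>
        (let h = span ((X ` {..<p} - S) \<union> (\<Union>j\<in>{2..m+1}. V j));
             lam = (\<lambda>v. la * l1 v + lb * l2 v);
             dpi = d_rep_pi br m h Y lam;
             D = (\<lambda>j g t. partial j g t + \<i> * complex_of_real (la * pt j t + lb * qt j t) * g t)
         in (\<forall>t. (\<Sum>i<p. dpi (X i) (dpi (X i) f) t) =
               (\<Sum>j\<in>UNIV. D j (D j f) t)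
               - (\<Sum>k < p - card S. complex_of_real ((lb * qq k t + la * pp k t)\<^sup>2) * f t))))"
proof -
  interpret induced_representation br V m X p S Y
    using strat basisX S_choice_subset[OF S_def] Y_enum by unfold_locales
  define lam where "lam = (\<lambda>v. la * l1 v + lb * l2 v)"
  have "linear lam"
    unfolding lam_def linear_iff
    by (simp add: linear_add[OF l1_lin] linear_add[OF l2_lin] linear_scale[OF l1_lin]
      linear_scale[OF l2_lin] algebra_simps)
  obtain en where en: "bij_betw en {..<p - card S} complement_indices"
    using ex_bij_betw_nat_finite[of complement_indices] card_complement_indices
    by (auto simp: complement_indices_def lessThan_atLeast0)
  have l2_vanish': "\<forall>i\<in>{1..m+1}. i \<noteq> m + 1 \<longrightarrow> (\<forall>x\<in>V i. l2 x = 0)"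
    using l2_vanish by auto
  have homog: "homog_poly s (\<lambda>t. l1 (cocycle_deriv i t))" "homog_poly m (\<lambda>t. l2 (cocycle_deriv i t))"
    if "i < p" for i
    using graded_poly_functional[OF l1_lin l1_vanish cocycle_deriv(1)[OF that]]
      graded_poly_functional[OF l2_lin l2_vanish' cocycle_deriv(1)[OF that]] by auto
  have "en k < p" if "k < p - card S" for k
    using en that unfolding bij_betw_def complement_indices_def by auto
  then show ?thesis
    using homog basis_index(1) sublaplacian_sum_of_squares[OF \<open>linear lam\<close> _ en]
    unfolding Let_def ideal_h_def[symmetric] twisted_partial_def lam_def
    by (intro exI[of _ "\<lambda>j t. l1 (cocycle_deriv (basis_index j) t)"]
        exI[of _ "\<lambda>j t. l2 (cocycle_deriv (basis_index j) t)"]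
        exI[of _ "\<lambda>k t. l1 (cocycle_deriv (en k) t)"] exI[of _ "\<lambda>k t. l2 (cocycle_deriv (en k) t)"]
        conjI allI impI)
      (simp_all add: add.commute)
qed

end
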